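(* Let $(X,\|\cdot\|)$ be a convex normed space and let $\{v_n\}_{n\in\mathbb{N}}\subset X$ be a sequence such that $\lim_{n\to\infty}\frac{v_n}{n}$ exists in $X$ and is not $0$. Then there exists $N_0$ such that $v_n\ne 0$ for $n>N_0$ and $\left\{\frac{v_n}{\|v_n\|}\right\}_{n>N_0}$ is a uniformly convex subset of $X$. Moreover, if $v_n\neq0$ for all $n\in\mathbb{N}$, then $\left\{\frac{v_n}{\|v_n\|}\right\}_{n\in\mathbb{N}}$ is a uniformly convex subset of $X$.
   Context: $\mathbb{N}=\{1,2,3,\dots\}$. A normed space $X$ is convex if for all $u,v\in X$ with $u\ne v$ and $\|u\|=\|v\|=1$ we have $\|u+v\|<2$. A subset $S\subset X$ is called uniformly convex if for every $\varepsilon>0$ there exists $\delta\in(0,1)$ such that for all $u,v\in S$ with $\|u\|=\|v\|=1$ and $\|u-v\|\ge\varepsilon$ we have $\|u+v\|\le 2-\delta$. *)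

theory Defs
  imports "HOL-Analysis.Analysis"
begin

definition convex_normed_space :: "'a::real_normed_vector itself \<Rightarrow> bool" where
  "convex_normed_space _ \<longleftrightarrow>
     (\<forall>u v::'a. u \<noteq> v \<and> norm u = 1 \<and> norm v = 1 \<longrightarrow> norm (u + v) < 2)"

definition uniformly_convex_set :: "'a::real_normed_vector set \<Rightarrow> bool" where
  "uniformly_convex_set S \<longleftrightarrow>
     (\<forall>\<epsilon>>0. \<exists>\<delta>. 0 < \<delta> \<and> \<delta> < 1 \<and>
        (\<forall>u\<in>S. \<forall>v\<in>S. norm u = 1 \<and> norm v = 1 \<and> norm (u - v) \<ge> \<epsilon>
            \<longrightarrow> norm (u + v) \<le> 2 - \<delta>))"

end

theory Submission
  imports Defs
begin

(* The normalised vectors v n /\<^sub>R norm (v n) converge to L /\<^sub>R norm L, so together with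
   their limit they form a compact set. On a compact set K, the pairs of unit vectors of K at
   distance at least \<epsilon> form a compact set, on which the continuous function
   (u, w) \<mapsto> norm (u + w) attains its maximum; by strict convexity that maximum is below 2. *)

lemma uniformly_convex_set_subset:
  "uniformly_convex_set S \<Longrightarrow> T \<subseteq> S \<Longrightarrow> uniformly_convex_set T"
  unfolding uniformly_convex_set_def by (meson subsetD)

lemma compact_imp_uniformly_convex_set:
  fixes K :: "'a::real_normed_vector set"
  assumes convex: "convex_normed_space TYPE('a)" and "compact K"
  shows "uniformly_convex_set K"
  unfolding uniformly_convex_set_def
proof (intro allI impI)
  fix \<epsilon> :: real
  assume "\<epsilon> > 0"
  define P where "P = (K \<times> K) \<inter>
    {p. norm (fst p) = 1 \<and> norm (snd p) = 1 \<and> \<epsilon> \<le> norm (fst p - snd p)}"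
  have "compact P"
    unfolding P_def using compact_Times[OF \<open>compact K\<close> \<open>compact K\<close>]
    by (intro compact_Int_closed closed_Collect_conj closed_Collect_eq closed_Collect_le
        continuous_intros)
  show "\<exists>\<delta>>0. \<delta> < 1 \<and> (\<forall>u\<in>K. \<forall>w\<in>K. norm u = 1 \<and> norm w = 1 \<and> \<epsilon> \<le> norm (u - w)
          \<longrightarrow> norm (u + w) \<le> 2 - \<delta>)"
  proof (cases "P = {}")
    case True
    then show ?thesis
      by (intro exI[of _ "1/2"]) (auto simp: P_def)
  next
    case False
    have "continuous_on P (\<lambda>p. norm (fst p + snd p))"
      by (intro continuous_intros)
    then obtain p where "p \<in> P" and p_max: "\<And>q. q \<in> P \<Longrightarrow> norm (fst q + snd q) \<le> norm (fst p + snd p)"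
      using continuous_attains_sup[OF \<open>compact P\<close> False] by blast
    with \<open>\<epsilon> > 0\<close> have "fst p \<noteq> snd p" "norm (fst p) = 1" "norm (snd p) = 1"
      by (auto simp: P_def)
    with convex have "norm (fst p + snd p) < 2"
      unfolding convex_normed_space_def by blast
    moreover have "norm (u + w) \<le> norm (fst p + snd p)"
      if "u \<in> K" "w \<in> K" "norm u = 1" "norm w = 1" "\<epsilon> \<le> norm (u - w)" for u w
      using p_max[of "(u, w)"] that by (simp add: P_def)
    ultimately show ?thesis
      by (intro exI[of _ "min (1/2) (2 - norm (fst p + snd p))"]) force
  qed
qed

lemma convergent_imp_uniformly_convex_range:
  fixes f :: "nat \<Rightarrow> 'a::real_normed_vector"
  assumes "convex_normed_space TYPE('a)" and "f \<longlonglongrightarrow> l"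
  shows "uniformly_convex_set (range f)"
proof -
  have "compact (insert l (range f))"
    using compactin_sequence_with_limit[of euclidean f l "range f"] assms(2) by simp
  with assms(1) show ?thesis
    by (meson compact_imp_uniformly_convex_set subset_insertI uniformly_convex_set_subset)
qed

lemma tendsto_sgn_of_linear_growth:
  fixes v :: "nat \<Rightarrow> 'a::real_normed_vector"
  assumes "(\<lambda>n. v n /\<^sub>R real n) \<longlonglongrightarrow> L" and "L \<noteq> 0"
  shows "(\<lambda>n. sgn (v n)) \<longlonglongrightarrow> sgn L"
proof -
  have "eventually (\<lambda>n. sgn (v n /\<^sub>R real n) = sgn (v n)) sequentially"
    using eventually_gt_at_top[of 0] by eventually_elim (simp add: sgn_scaleR)
  with tendsto_sgn[OF assms] show ?thesis
    by (rule Lim_transform_eventually)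
qed

theorem mainTheorem8:
  fixes v :: "nat \<Rightarrow> 'a::real_normed_vector" and L :: 'a
  assumes "convex_normed_space TYPE('a)"
    and "(\<lambda>n. v n /\<^sub>R real n) \<longlonglongrightarrow> L"
    and "L \<noteq> 0"
  shows "(\<exists>N0. (\<forall>n>N0. v n \<noteq> 0) \<and>
            uniformly_convex_set ((\<lambda>n. v n /\<^sub>R norm (v n)) ` {n. n > N0}))
       \<and> ((\<forall>n\<ge>1. v n \<noteq> 0) \<longrightarrow>
            uniformly_convex_set ((\<lambda>n. v n /\<^sub>R norm (v n)) ` {n. n \<ge> 1}))"
proof -
  \<comment> \<open>Holds for every index set.\<close>
  have uc: "uniformly_convex_set ((\<lambda>n. v n /\<^sub>R norm (v n)) ` A)" for A
    using convergent_imp_uniformly_convex_range[OF assms(1) tendsto_sgn_of_linear_growth[OF assms(2,3)]]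
    by (rule uniformly_convex_set_subset) (auto simp: sgn_div_norm)
  have "eventually (\<lambda>n. v n /\<^sub>R real n \<noteq> 0) sequentially"
    using tendsto_imp_eventually_ne[OF assms(2,3)] .
  then obtain N0 where "\<forall>n>N0. v n \<noteq> 0"
    unfolding eventually_sequentially by (metis less_imp_le scaleR_zero_right)
  with uc show ?thesis
    by blast
qed

end
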